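(* Let $r\ge2$ be an even integer, let $Q_0<Q_1<\dots<Q_n<Q_{n+1}$ and $P_1,\dots,P_n\in\mathbb R$. Then there is a unique $(\hat u_0,\dots,\hat u_{n+1})\in\mathbb R^{n+2}$ with $\hat u_0=\hat u_{n+1}=0$ satisfying, for $i=1,\dots,n$, $$P_i=-\left|\frac{\hat u_{i+1}-\hat u_i}{Q_{i+1}-Q_i}\right|^{r-2}\frac{\hat u_{i+1}-\hat u_i}{Q_{i+1}-Q_i}+\left|\frac{\hat u_i-\hat u_{i-1}}{Q_i-Q_{i-1}}\right|^{r-2}\frac{\hat u_i-\hat u_{i-1}}{Q_i-Q_{i-1}}.$$ *)

theory Defs
  imports Complex_Main
begin

definition rphi :: "nat \<Rightarrow> real \<Rightarrow> real" where
  "rphi r x = \<bar>x\<bar> ^ (r - 2) * x"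

definition disc_sol :: "nat \<Rightarrow> nat \<Rightarrow> (nat \<Rightarrow> real) \<Rightarrow> (nat \<Rightarrow> real) \<Rightarrow> (nat \<Rightarrow> real) \<Rightarrow> bool" where
  "disc_sol r n Q P u \<longleftrightarrow> u 0 = 0 \<and> u (n + 1) = 0 \<and>
     (\<forall>i\<in>{1..n}. P i = - rphi r ((u (i + 1) - u i) / (Q (i + 1) - Q i))
                        + rphi r ((u i - u (i - 1)) / (Q i - Q (i - 1))))"

end

theory Submission
  imports Defs
begin

text \<open>
  Summing the equations from 1 to k shows that the flux rphi r of the k-th difference
  quotient equals c - (P 1 + ... + P (k-1)), where c is the flux on the first interval.
  Since rphi r is an increasing bijection of the reals with inverse root (r - 1), a
  solution is therefore the profile obtained by shooting with initial flux c, subject to the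
  single condition that this profile vanishes at n + 1. That endpoint value is continuous
  and strictly increasing in c, and it changes sign on [-B, B] for B = |P 1| + ... + |P n|,
  so exactly one c works.
\<close>

definition cum_load :: "(nat \<Rightarrow> real) \<Rightarrow> nat \<Rightarrow> real" where
  "cum_load P j = (\<Sum>k = 1..j. P k)"

definition diff_quot :: "(nat \<Rightarrow> real) \<Rightarrow> (nat \<Rightarrow> real) \<Rightarrow> nat \<Rightarrow> real" where
  "diff_quot Q u k = (u k - u (k - 1)) / (Q k - Q (k - 1))"

definition shoot :: "nat \<Rightarrow> (nat \<Rightarrow> real) \<Rightarrow> (nat \<Rightarrow> real) \<Rightarrow> real \<Rightarrow> nat \<Rightarrow> real" where
  "shoot r Q P c i = (\<Sum>j<i. (Q (Suc j) - Q j) * root (r - 1) (c - cum_load P j))"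

lemma cum_load_Suc [simp]: "cum_load P (Suc j) = cum_load P j + P (Suc j)"
  by (simp add: cum_load_def)

lemma abs_cum_load_le:
  assumes "j \<le> n"
  shows "\<bar>cum_load P j\<bar> \<le> (\<Sum>k = 1..n. \<bar>P k\<bar>)"
proof -
  have "\<bar>cum_load P j\<bar> \<le> (\<Sum>k = 1..j. \<bar>P k\<bar>)"
    unfolding cum_load_def by (rule sum_abs)
  also have "\<dots> \<le> (\<Sum>k = 1..n. \<bar>P k\<bar>)"
    using assms by (intro sum_mono2) auto
  finally show ?thesis .
qed

lemma rphi_eq_sgn_mult_power:
  assumes "r \<ge> 2"
  shows "rphi r x = sgn x * \<bar>x\<bar> ^ (r - 1)"
proof -
  have "r - 1 = Suc (r - 2)" using assms by simp
  then have "sgn x * \<bar>x\<bar> ^ (r - 1) = (sgn x * \<bar>x\<bar>) * \<bar>x\<bar> ^ (r - 2)"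
    by (simp only: power_Suc mult.assoc)
  then show ?thesis by (simp add: rphi_def sgn_mult_abs)
qed

lemma rphi_root:
  assumes "r \<ge> 2"
  shows "rphi r (root (r - 1) y) = y"
  using assms by (simp add: rphi_eq_sgn_mult_power sgn_power_root)

lemma root_rphi:
  assumes "r \<ge> 2"
  shows "root (r - 1) (rphi r x) = x"
  using assms by (simp add: rphi_eq_sgn_mult_power root_sgn_power)

lemma diff_quot_shoot:
  assumes "Q (Suc j) \<noteq> Q j"
  shows "diff_quot Q (shoot r Q P c) (Suc j) = root (r - 1) (c - cum_load P j)"
  using assms by (simp add: diff_quot_def shoot_def)

lemma flux_eq_first_flux_minus_cum_load:
  assumes "disc_sol r n Q P u" and "1 \<le> k" and "k \<le> n + 1"
  shows "rphi r (diff_quot Q u k) = rphi r (diff_quot Q u 1) - cum_load P (k - 1)"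
  using assms(2,3)
proof (induction k)
  case 0
  then show ?case by simp
next
  case (Suc k)
  show ?case
  proof (cases "k = 0")
    case True
    then show ?thesis by (simp add: cum_load_def)
  next
    case False
    then have "P k = - rphi r (diff_quot Q u (k + 1)) + rphi r (diff_quot Q u k)"
      using assms(1) Suc.prems unfolding disc_sol_def diff_quot_def by auto
    moreover obtain j where "k = Suc j" using False by (cases k) auto
    ultimately show ?thesis using Suc by simp
  qed
qed

lemma eq_shoot_if_diff_quot:
  assumes "u 0 = 0"
    and "\<And>j. j < m \<Longrightarrow> Q j < Q (Suc j)"
    and "\<And>j. j < m \<Longrightarrow> diff_quot Q u (Suc j) = root (r - 1) (c - cum_load P j)"
    and "i \<le> m"
  shows "u i = shoot r Q P c i"
  using assms(4)
proof (induction i)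
  case 0
  then show ?case using assms(1) by (simp add: shoot_def)
next
  case (Suc j)
  have "u (Suc j) - u j = (Q (Suc j) - Q j) * root (r - 1) (c - cum_load P j)"
    using assms(2,3)[of j] Suc.prems by (simp add: diff_quot_def field_simps)
  then show ?case using Suc by (simp add: shoot_def)
qed

lemma disc_sol_iff_shoot:
  assumes "r \<ge> 2" and Q_mono: "\<And>i. i \<le> n \<Longrightarrow> Q i < Q (i + 1)"
  shows "disc_sol r n Q P u \<longleftrightarrow>
    (\<exists>c. shoot r Q P c (n + 1) = 0 \<and> (\<forall>i \<le> n + 1. u i = shoot r Q P c i))"
proof
  assume sol: "disc_sol r n Q P u"
  define c where "c = rphi r (diff_quot Q u 1)"
  have "diff_quot Q u (Suc j) = root (r - 1) (c - cum_load P j)" if "j < n + 1" for j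
  proof -
    have "rphi r (diff_quot Q u (Suc j)) = c - cum_load P j"
      using flux_eq_first_flux_minus_cum_load[OF sol, of "Suc j"] that unfolding c_def by simp
    then show ?thesis using root_rphi[OF assms(1), of "diff_quot Q u (Suc j)"] by simp
  qed
  then have "\<forall>i \<le> n + 1. u i = shoot r Q P c i"
    using sol Q_mono by (auto simp: disc_sol_def intro: eq_shoot_if_diff_quot[where m = "n + 1"])
  moreover have "u (n + 1) = 0" using sol by (simp add: disc_sol_def)
  ultimately show "\<exists>c. shoot r Q P c (n + 1) = 0 \<and> (\<forall>i \<le> n + 1. u i = shoot r Q P c i)"
    by auto
next
  assume "\<exists>c. shoot r Q P c (n + 1) = 0 \<and> (\<forall>i \<le> n + 1. u i = shoot r Q P c i)"
  then obtain c where end0: "shoot r Q P c (n + 1) = 0"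
    and u: "\<And>i. i \<le> n + 1 \<Longrightarrow> u i = shoot r Q P c i" by blast
  have flux: "rphi r (diff_quot Q u (Suc j)) = c - cum_load P j" if "j \<le> n" for j
  proof -
    have "diff_quot Q u (Suc j) = diff_quot Q (shoot r Q P c) (Suc j)"
      using u that by (simp add: diff_quot_def)
    then show ?thesis
      using diff_quot_shoot[of Q j] Q_mono[OF that] rphi_root[OF assms(1)] by simp
  qed
  show "disc_sol r n Q P u"
    unfolding disc_sol_def
  proof (intro conjI ballI)
    show "u 0 = 0" "u (n + 1) = 0" using u end0 by (simp_all add: shoot_def)
    fix i assume i: "i \<in> {1..n}"
    then obtain j where j: "i = Suc j" by (cases i) auto
    show "P i = - rphi r ((u (i + 1) - u i) / (Q (i + 1) - Q i))
                + rphi r ((u i - u (i - 1)) / (Q i - Q (i - 1)))"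
      using flux[of i] flux[of j] i j by (simp add: diff_quot_def)
  qed
qed

lemma strict_mono_shoot:
  assumes "r \<ge> 2" and "\<And>j. j < m \<Longrightarrow> Q j < Q (Suc j)" and "m > 0"
  shows "strict_mono (\<lambda>c. shoot r Q P c m)"
proof (rule strict_monoI)
  fix a b :: real assume "a < b"
  show "shoot r Q P a m < shoot r Q P b m"
    unfolding shoot_def
  proof (rule sum_strict_mono)
    fix j assume "j \<in> {..<m}"
    then show "(Q (Suc j) - Q j) * root (r - 1) (a - cum_load P j)
             < (Q (Suc j) - Q j) * root (r - 1) (b - cum_load P j)"
      using assms(1) assms(2)[of j] \<open>a < b\<close> by (intro mult_strict_left_mono) auto
  qed (use \<open>m > 0\<close> in auto)
qed

lemma shoot_has_root:
  assumes "r \<ge> 2" and "\<And>i. i \<le> n \<Longrightarrow> Q i < Q (i + 1)"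
  shows "\<exists>c. shoot r Q P c (n + 1) = 0"
proof -
  define B where "B = (\<Sum>k = 1..n. \<bar>P k\<bar>)"
  have load_le: "\<bar>cum_load P j\<bar> \<le> B" if "j < n + 1" for j
    using that abs_cum_load_le[of j n P] by (simp add: B_def)
  have "shoot r Q P (- B) (n + 1) \<le> 0"
    unfolding shoot_def
  proof (intro sum_nonpos mult_nonneg_nonpos)
    fix j assume "j \<in> {..<n + 1}"
    then show "0 \<le> Q (Suc j) - Q j" "root (r - 1) (- B - cum_load P j) \<le> 0"
      using assms(2)[of j] load_le[of j] assms(1) by auto
  qed
  moreover have "0 \<le> shoot r Q P B (n + 1)"
    unfolding shoot_def
  proof (intro sum_nonneg mult_nonneg_nonneg)
    fix j assume "j \<in> {..<n + 1}"
    then show "0 \<le> Q (Suc j) - Q j" "0 \<le> root (r - 1) (B - cum_load P j)"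
      using assms(2)[of j] load_le[of j] by (auto intro!: real_root_ge_zero)
  qed
  moreover have "- B \<le> B" using load_le[of 0] by simp
  moreover have "continuous_on {- B..B} (\<lambda>c. shoot r Q P c (n + 1))"
    unfolding shoot_def by (intro continuous_intros)
  ultimately show ?thesis using IVT'[of "\<lambda>c. shoot r Q P c (n + 1)"] by blast
qed

theorem mainTheorem8:
  fixes r n :: nat and Q P :: "nat \<Rightarrow> real"
  assumes "even r" and "r \<ge> 2"
    and "\<And>i. i \<le> n \<Longrightarrow> Q i < Q (i + 1)"
  shows "\<exists>u. disc_sol r n Q P u \<and>
           (\<forall>v. disc_sol r n Q P v \<longrightarrow> (\<forall>i\<le>n + 1. v i = u i))"
proof -
  note sol_iff = disc_sol_iff_shoot[where Q = Q, OF assms(2,3)]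
  obtain c where c: "shoot r Q P c (n + 1) = 0"
    using shoot_has_root[where Q = Q, OF assms(2,3)] by blast
  have "strict_mono (\<lambda>c. shoot r Q P c (n + 1))"
    using assms(3) by (intro strict_mono_shoot[OF assms(2)]) auto
  then have c_unique: "c' = c" if "shoot r Q P c' (n + 1) = 0" for c'
    using c that by (metis strict_mono_eq)
  show ?thesis
  proof (intro exI conjI allI impI)
    show "disc_sol r n Q P (shoot r Q P c)" using sol_iff c by blast
    fix v i assume "disc_sol r n Q P v" and "i \<le> n + 1"
    then show "v i = shoot r Q P c i" using sol_iff c_unique by blast
  qed
qed

end
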